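(* Let $\mathsf{A}$ and $\mathsf{B}$ be two distinct users in the all-to-all broadcast coded slotted ALOHA model described in the context, and let $\boldsymbol{g} = [\mathcal{G}_\mathsf{A}(\mathsf{B}),\,\mathcal{A}_\mathsf{B}(\mathsf{A}),\,\mathcal{G}_\mathsf{B}(\mathsf{A})]$. Then $\Pr\{\boldsymbol{g} = [1,\,0,\,1]\} = 0$; that is, it can never happen that $\mathsf{A}$ resolves $\mathsf{B}$, $\mathsf{A}$'s handshake decoding on behalf of $\mathsf{B}$ fails to resolve $\mathsf{A}$, and yet $\mathsf{B}$ actually resolves $\mathsf{A}$.
   Context: Model (all-to-all broadcast coded slotted ALOHA): there are $m$ users and a frame of $n$ slots. Each user independently draws a degree $l\in\{0,\dots,q\}$ with probability $\lambda_l$ (degree distribution $\lambda(x)=\sum_{l=0}^q\lambda_l x^l$) and transmits $l$ copies of its packet in $l$ distinct slots of the frame chosen uniformly at random; each copy contains pointers to the locations of all copies. This is represented by a bipartite graph $\mathcal{G}=\{\mathcal{V},\mathcal{C},\mathcal{E}\}$ whose variable nodes (VNs) are the users, whose check nodes (CNs) are the slots, and with an edge between user $j$ and slot $i$ iff user $j$ transmits in slot $i$. Users are half-duplex: a user receives nothing in the slots it transmits in. Decoding (peeling): given a bipartite graph, repeatedly find a CN connected to exactly one not-yet-resolved VN (a singleton slot), declare that VN resolved, and remove all edges of that VN (interference cancellation of all its copies, whose locations are known from the pointers); stop when no such CN exists. A VN is resolvable on a graph iff it is resolved by this procedure (equivalently, it does not belong to a stopping set: a set $\mathcal{S}$ of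 VNs of nonzero degree such that every CN adjacent to $\mathcal{S}$ is connected to $\mathcal{S}$ at least twice). Induced graph: for a user $\mathsf{U}$, $\mathcal{G}_\mathsf{U}$ is the graph obtained from $\mathcal{G}$ by removing the CNs (slots) in which $\mathsf{U}$ transmits together with all their edges. For users $\mathsf{U}\neq\mathsf{V}$, $\mathcal{G}_\mathsf{U}(\mathsf{V})=1$ if $\mathsf{V}$ is resolvable by peeling on $\mathcal{G}_\mathsf{U}$, and $\mathcal{G}_\mathsf{U}(\mathsf{V})=0$ otherwise. Reconstructed graph: after user $\mathsf{A}$ decodes on $\mathcal{G}_\mathsf{A}$, it forms the graph $\mathcal{A}''$ consisting of the users it resolved, the slots of $\mathcal{G}_\mathsf{A}$, and the edges from each resolved user to its slots; it also knows which slots still contain residual interference (i.e., contain packets of users it did not resolve). It removes the slots with residual interference and all edges attached to them, obtaining $\mathcal{A}'$. It then adds itself as a VN together with its own slots as CNs, connecting itself to these slots; the result is the reconstructed graph $\mathcal{A}$. If $\mathcal{G}_\mathsf{A}(\mathsf{B})=1$ (so the slots of $\mathsf{B}$ are known to $\mathsf{A}$), $\mathcal{A}_\mathsf{B}$ denotes the graph obtained from $\mathcal{A}$ by removing the slots used by $\mathsf{B}$ and their edges, and $\mathcal{A}_\mathsf{B}(\mathsf{A})=1$ if $\mathsf{A}$ is resolvable by peeling on $\mathcal{A}_\mathsf{B}$, $\mathcal{A}_\mathsf{B}(\mathsf{A})=0$ otherwise. If $\mathcal{G}_\mathsf{A}(\mathsf{B})=0$, one sets $\mathcal{A}_\mathsf{B}(\mathsf{A})=\mathsf{x}$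 (handshake not possible). The probability is over the random choice of degrees and slots. *)

theory Defs
  imports "HOL-Probability.Probability"
begin

text \<open>Users are the natural numbers below m (variable nodes), slots are the natural numbers
below n (check nodes). A configuration  tx :: nat \<Rightarrow> nat set  assigns to each user the set of
slots it transmits in.

A bipartite graph is given by a set of variable nodes V, a set of check nodes C and, for
each variable node v, its set of neighbouring check nodes  nb v  (assumed to lie in C).

Peeling: the set of resolved variable nodes is the least set closed under the rule
"if a check node c is adjacent to u and every other variable node adjacent to c is
already resolved (c is a singleton slot), then u is resolved".  This is exactly the
final set of resolved VNs of the iterative peeling procedure.\<close>

inductive peel_resolved :: "nat set \<Rightarrow> nat set \<Rightarrow> (nat \<Rightarrow> nat set) \<Rightarrow> nat \<Rightarrow> bool"
  for V :: "nat set" and C :: "nat set" and nb :: "nat \<Rightarrow> nat set" where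
  singleton: "\<lbrakk> u \<in> V; c \<in> C; c \<in> nb u;
               \<forall>v\<in>V. v \<noteq> u \<longrightarrow> c \<in> nb v \<longrightarrow> peel_resolved V C nb v \<rbrakk>
              \<Longrightarrow> peel_resolved V C nb u"

text \<open>Induced graph G_U: remove the slots of U (and their edges).  G_U(W) = 1 iff W is
resolvable on G_U.\<close>

definition induced_slots :: "nat \<Rightarrow> (nat \<Rightarrow> nat set) \<Rightarrow> nat \<Rightarrow> nat set" where
  "induced_slots n tx U = {..<n} - tx U"

definition G_res :: "nat \<Rightarrow> nat \<Rightarrow> (nat \<Rightarrow> nat set) \<Rightarrow> nat \<Rightarrow> nat \<Rightarrow> bool" where
  "G_res m n tx U W =
     peel_resolved {..<m} (induced_slots n tx U) (\<lambda>v. tx v \<inter> induced_slots n tx U) W"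

definition resolved_by :: "nat \<Rightarrow> nat \<Rightarrow> (nat \<Rightarrow> nat set) \<Rightarrow> nat \<Rightarrow> nat set" where
  "resolved_by m n tx A = {v \<in> {..<m}. G_res m n tx A v}"

definition residual_slots :: "nat \<Rightarrow> nat \<Rightarrow> (nat \<Rightarrow> nat set) \<Rightarrow> nat \<Rightarrow> nat set" where
  "residual_slots m n tx A =
     {s \<in> induced_slots n tx A. \<exists>v\<in>{..<m} - resolved_by m n tx A. s \<in> tx v}"

definition clean_slots :: "nat \<Rightarrow> nat \<Rightarrow> (nat \<Rightarrow> nat set) \<Rightarrow> nat \<Rightarrow> nat set" where
  "clean_slots m n tx A = induced_slots n tx A - residual_slots m n tx A"

text \<open>Reconstructed graph \<A>: VNs = resolved users plus A; CNs = clean slots plus A's slots;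
edges: resolved users to their clean slots, A to its own slots.\<close>
definition rec_V :: "nat \<Rightarrow> nat \<Rightarrow> (nat \<Rightarrow> nat set) \<Rightarrow> nat \<Rightarrow> nat set" where
  "rec_V m n tx A = insert A (resolved_by m n tx A)"

definition rec_C :: "nat \<Rightarrow> nat \<Rightarrow> (nat \<Rightarrow> nat set) \<Rightarrow> nat \<Rightarrow> nat set" where
  "rec_C m n tx A = clean_slots m n tx A \<union> tx A"

definition rec_nb :: "nat \<Rightarrow> nat \<Rightarrow> (nat \<Rightarrow> nat set) \<Rightarrow> nat \<Rightarrow> nat \<Rightarrow> nat set" where
  "rec_nb m n tx A v =
     (if v = A then tx A
      else if v \<in> resolved_by m n tx A then tx v \<inter> clean_slots m n tx A else {})"

text \<open>Handshake value \<A>_B(A): None encodes x (handshake not possible, G_A(B) = 0);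
otherwise Some b with b = resolvability of A on \<A>_B (\<A> with B's slots removed).\<close>
definition handshake :: "nat \<Rightarrow> nat \<Rightarrow> (nat \<Rightarrow> nat set) \<Rightarrow> nat \<Rightarrow> nat \<Rightarrow> bool option" where
  "handshake m n tx A B =
     (if G_res m n tx A B then
        Some (peel_resolved (rec_V m n tx A) (rec_C m n tx A - tx B)
                (\<lambda>v. rec_nb m n tx A v - tx B) A)
      else None)"

definition user_pmf :: "nat pmf \<Rightarrow> nat \<Rightarrow> nat set pmf" where
  "user_pmf lam n = bind_pmf lam (\<lambda>l. pmf_of_set {S. S \<subseteq> {..<n} \<and> card S = l})"

definition config_pmf :: "nat \<Rightarrow> nat \<Rightarrow> nat pmf \<Rightarrow> (nat \<Rightarrow> nat set) pmf" where
  "config_pmf m n lam = Pi_pmf {..<m} {} (\<lambda>_. user_pmf lam n)"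

end

theory Submission
  imports Defs
begin

text \<open>The event is empty. If B resolves A, then A has a slot outside the slots of B.
In the reconstructed graph of A the slots of A carry no edge except those of A itself, so
after removing the slots of B this slot is a singleton and A is peeled off at once.\<close>

lemma peel_resolved_has_neighbour:
  assumes "peel_resolved V C nb u"
  shows "\<exists>c\<in>C. c \<in> nb u"
  using assms by (cases rule: peel_resolved.cases) auto

lemma peel_resolved_if_private_neighbour:
  assumes "u \<in> V" and "c \<in> C" and "c \<in> nb u"
    and "\<And>v. v \<in> V \<Longrightarrow> v \<noteq> u \<Longrightarrow> c \<notin> nb v"
  shows "peel_resolved V C nb u"
  using assms by (intro peel_resolved.singleton) auto

lemma G_res_has_slot_outside:
  assumes "G_res m n tx U W"
  shows "\<exists>c\<in>tx W. c \<notin> tx U"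
  using peel_resolved_has_neighbour[OF assms[unfolded G_res_def]]
  by (auto simp: induced_slots_def)

lemma rec_nb_disjoint_own_slots:
  assumes "v \<noteq> A"
  shows "rec_nb m n tx A v \<inter> tx A = {}"
  using assms by (auto simp: rec_nb_def clean_slots_def induced_slots_def)

lemma handshake_Some_True_if_G_res:
  assumes "G_res m n tx A B" and "G_res m n tx B A"
  shows "handshake m n tx A B = Some True"
proof -
  obtain c where c: "c \<in> tx A" "c \<notin> tx B"
    using G_res_has_slot_outside[OF assms(2)] by blast
  have "peel_resolved (rec_V m n tx A) (rec_C m n tx A - tx B)
          (\<lambda>v. rec_nb m n tx A v - tx B) A"
  proof (rule peel_resolved_if_private_neighbour)
    show "A \<in> rec_V m n tx A" by (simp add: rec_V_def)
    show "c \<in> rec_C m n tx A - tx B" using c by (simp add: rec_C_def)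
    show "c \<in> rec_nb m n tx A A - tx B" using c by (simp add: rec_nb_def)
    show "c \<notin> rec_nb m n tx A v - tx B" if "v \<noteq> A" for v
      using rec_nb_disjoint_own_slots[OF that] c(1) by blast
  qed
  then show ?thesis using assms(1) by (simp add: handshake_def)
qed

theorem theorem1:
  fixes m n q :: nat and lam :: "nat pmf" and A B :: nat
  assumes "set_pmf lam \<subseteq> {0..q}" and "q \<le> n"
    and "A < m" and "B < m" and "A \<noteq> B"
  shows "measure_pmf.prob (config_pmf m n lam)
           {tx. G_res m n tx A B \<and> handshake m n tx A B = Some False \<and> G_res m n tx B A} = 0"
proof -
  have "{tx. G_res m n tx A B \<and> handshake m n tx A B = Some False \<and> G_res m n tx B A} = {}"
    using handshake_Some_True_if_G_res by fastforce
  then show ?thesis by (simp only: measure_empty)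
qed

end
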